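(* Let $n>2$ and let $p_{(1)}<\dots<p_{(n)}$ be the order statistics of $n$ i.i.d. $\mathrm{Uniform}(0,1)$ random variables. Let $K(x,t):=x\log\frac xt+(1-x)\log\frac{1-x}{1-t}$ for $x\in[0,1)$, $t\in(0,1)$ (with $0\log0=0$). Then for every $s>0$ and every $j\in\{2,\dots,n\}$, $$\mathbb P\big(nK(j/n,p_{(j)})>s\big)\le e\sqrt2\,j\,e^{-(1-1/j)s},$$ and for $j=1$, $$\mathbb P\big(nK(1/n,p_{(1)})>s\big)\le(1+9/e)\,e^{-s}.$$ *)

theory Defs
  imports "HOL-Probability.Probability"
begin

definition order_stat :: "nat \<Rightarrow> (nat \<Rightarrow> real) \<Rightarrow> nat \<Rightarrow> real" where
  "order_stat n x j = sort (map x [0..<n]) ! (j - 1)"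

definition KL :: "real \<Rightarrow> real \<Rightarrow> real" where
  "KL x t = (if x = 0 then 0 else x * ln (x / t))
            + (if x = 1 then 0 else (1 - x) * ln ((1 - x) / (1 - t)))"

end

theory Submission
  imports Defs
begin

text \<open>Write \<open>p = p\<^sub>j\<close> for the j-th order statistic and \<open>x = j/n\<close>. For \<open>t \<le> x\<close>, the event
  \<open>p \<le> t\<close> says that at least j of the n samples lie in \<open>[0,t]\<close>, and the Chernoff bound for this
  binomial count (Markov's inequality for a product of independent weights of mean 1) gives
  \<open>P(p \<le> t) \<le> exp (-n K(x,t))\<close>; symmetrically \<open>P(p \<ge> t) \<le> exp (-n K(x,t))\<close> for \<open>t \<ge> x\<close>,
  via \<open>K(1-x,1-t) = K(x,t)\<close>. On each side of x the set of t with \<open>n K(x,t) > s\<close> is bounded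
  towards x, so continuity of measure at its extremity turns these pointwise bounds into
  \<open>P(n K(x,p) > s) \<le> 2 exp (-s)\<close>, which is below both bounds claimed.\<close>

lemma sorted_nth_iff_less_length_filter:
  fixes ys :: "'a::linorder list"
  assumes "sorted ys" "k < length ys" and down: "\<And>a b. P b \<Longrightarrow> a \<le> b \<Longrightarrow> P a"
  shows "P (ys ! k) \<longleftrightarrow> k < length (filter P ys)"
  using assms(1,2)
proof (induction ys arbitrary: k)
  case Nil
  then show ?case by simp
next
  case (Cons y ys)
  show ?case
  proof (cases "P y")
    case True
    then show ?thesis using Cons by (cases k) auto
  next
    case False
    then have "\<forall>z\<in>set (y # ys). \<not> P z" using Cons.prems(1) down by auto
    then show ?thesis using Cons.prems(2) nth_mem[of k "y # ys"] by (auto simp: filter_empty_conv)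
  qed
qed

lemma order_stat_downclosed_iff:
  assumes "1 \<le> j" "j \<le> n" and "\<And>a b. P b \<Longrightarrow> a \<le> b \<Longrightarrow> P a"
  shows "P (order_stat n x j) \<longleftrightarrow> j \<le> card {i. i < n \<and> P (x i)}"
proof -
  have "length (filter P (sort (map x [0..<n]))) = card {i. i < n \<and> P (x i)}"
    by (auto simp: filter_sort length_filter_conv_card intro!: arg_cong[where f = card])
  then show ?thesis
    unfolding order_stat_def
    using sorted_nth_iff_less_length_filter[of "sort (map x [0..<n])" "j - 1" P] assms by auto
qed

lemma order_stat_le_iff:
  assumes "1 \<le> j" "j \<le> n"
  shows "order_stat n x j \<le> t \<longleftrightarrow> j \<le> card {i. i < n \<and> x i \<le> t}"
  using order_stat_downclosed_iff[of j n "\<lambda>v. v \<le> t" x] assms by auto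

lemma order_stat_ge_imp_card:
  assumes "1 \<le> j" "j \<le> n" "t \<le> order_stat n x j"
  shows "n - j + 1 \<le> card {i. i < n \<and> t \<le> x i}"
proof -
  have less: "card {i. i < n \<and> x i < t} < j"
    using order_stat_downclosed_iff[of j n "\<lambda>v. v < t" x] assms by auto
  have "card {i. i < n \<and> x i < t} + card {i. i < n \<and> t \<le> x i}
        = card ({i. i < n \<and> x i < t} \<union> {i. i < n \<and> t \<le> x i})"
    by (rule card_Un_disjoint[symmetric]) auto
  also have "{i. i < n \<and> x i < t} \<union> {i. i < n \<and> t \<le> x i} = {..<n}" by auto
  finally have "card {i. i < n \<and> x i < t} + card {i. i < n \<and> t \<le> x i} = n" by simp
  then show ?thesis using less assms(2) by linarith
qed

lemma KL_swap: "KL (1 - x) (1 - t) = KL x t"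
  unfolding KL_def by (simp add: add.commute)

lemma exp_KL:
  assumes "0 < t" "t < 1" "m \<le> n" "0 < n"
  defines "x \<equiv> real m / real n"
  shows "exp (real n * KL x t) = (x / t) ^ m * ((1 - x) / (1 - t)) ^ (n - m)"
proof -
  have nx: "real n * x = real m" and nx': "real n * (1 - x) = real (n - m)"
    using assms by (auto simp: x_def algebra_simps of_nat_diff)
  have "real n * KL x t
        = (if x = 0 then 0 else real m * ln (x / t))
          + (if x = 1 then 0 else real (n - m) * ln ((1 - x) / (1 - t)))"
    unfolding KL_def distrib_left by (simp flip: nx nx')
  also have "exp \<dots> = (x / t) ^ m * ((1 - x) / (1 - t)) ^ (n - m)"
  proof -
    have "0 \<le> x" "x \<le> 1" using assms by (auto simp: x_def)
    moreover have "x = 0 \<longleftrightarrow> m = 0" "x = 1 \<longleftrightarrow> m = n" using assms by (auto simp: x_def)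
    ultimately show ?thesis
      using assms(1,2) by (auto simp: exp_add exp_of_nat_mult simp del: of_nat_diff)
  qed
  finally show ?thesis .
qed

lemma prod_if_eq_power_card:
  fixes a b :: "'b::comm_monoid_mult"
  shows "(\<Prod>i<n. if P i then a else b)
         = a ^ card {i. i < n \<and> P i} * b ^ (n - card {i. i < n \<and> P i})"
proof -
  have "(\<Prod>i<n. if P i then a else b) = (\<Prod>i\<in>{..<n} \<inter> {i. P i}. a) * (\<Prod>i\<in>{..<n} \<inter> - {i. P i}. b)"
    by (rule prod.If_cases) simp
  also have "{..<n} \<inter> {i. P i} = {i. i < n \<and> P i}" by auto
  also have "{..<n} \<inter> - {i. P i} = {..<n} - {i. i < n \<and> P i}" by auto
  moreover have "card ({..<n} - {i. i < n \<and> P i}) = n - card {i. i < n \<and> P i}"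
    by (subst card_Diff_subset) auto
  ultimately show ?thesis by simp
qed

lemma power_mult_power_diff_mono:
  fixes a b :: real
  assumes "0 \<le> b" "b \<le> a" "m \<le> k" "k \<le> n"
  shows "a ^ m * b ^ (n - m) \<le> a ^ k * b ^ (n - k)"
proof -
  have "a ^ m * b ^ (n - m) = a ^ m * b ^ (k - m) * b ^ (n - k)"
    using assms by (simp add: mult.assoc flip: power_add)
  also have "\<dots> \<le> a ^ m * a ^ (k - m) * b ^ (n - k)"
    using assms by (intro mult_right_mono mult_left_mono power_mono) auto
  also have "\<dots> = a ^ k * b ^ (n - k)"
    using assms by (simp flip: power_add)
  finally show ?thesis .
qed

lemma sets_count_ge:
  fixes X :: "nat \<Rightarrow> 'a \<Rightarrow> real"
  assumes "\<And>i. i < n \<Longrightarrow> X i \<in> borel_measurable M" and [measurable]: "S \<in> sets borel"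
  shows "{\<omega> \<in> space M. m \<le> card {i. i < n \<and> X i \<omega> \<in> S}} \<in> sets M"
proof -
  have "(\<lambda>\<omega>. of_bool (X i \<omega> \<in> S) :: real) \<in> borel_measurable M" if "i < n" for i
  proof -
    have [measurable]: "X i \<in> borel_measurable M" using assms(1) that .
    show ?thesis by measurable
  qed
  then have [measurable]: "(\<lambda>\<omega>. \<Sum>i<n. of_bool (X i \<omega> \<in> S) :: real) \<in> borel_measurable M"
    by (intro borel_measurable_sum) auto
  have card_eq: "real (card {i. i < n \<and> X i \<omega> \<in> S}) = (\<Sum>i<n. of_bool (X i \<omega> \<in> S))" for \<omega>
  proof -
    have "{i. i < n \<and> X i \<omega> \<in> S} = {..<n} \<inter> {i. X i \<omega> \<in> S}" by auto
    then show ?thesis by simp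
  qed
  have "{\<omega> \<in> space M. m \<le> card {i. i < n \<and> X i \<omega> \<in> S}}
        = {\<omega> \<in> space M. real m \<le> (\<Sum>i<n. of_bool (X i \<omega> \<in> S))}"
    by (simp flip: card_eq)
  also have "\<dots> \<in> sets M" by measurable
  finally show ?thesis .
qed

lemma (in prob_space) prob_count_ge_tilted_le:
  fixes X :: "nat \<Rightarrow> 'a \<Rightarrow> real"
  assumes indep: "indep_vars (\<lambda>_. borel) X {..<n}" and [measurable]: "S \<in> sets borel"
    and q: "\<And>i. i < n \<Longrightarrow> prob {\<omega> \<in> space M. X i \<omega> \<in> S} = q"
    and ab: "0 \<le> b" "b \<le> a" "a * q + b * (1 - q) = 1"
  shows "prob {\<omega> \<in> space M. m \<le> card {i. i < n \<and> X i \<omega> \<in> S}} * (a ^ m * b ^ (n - m)) \<le> 1"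
proof -
  have [measurable]: "X i \<in> borel_measurable M" if "i < n" for i
    using indep that by (auto simp: indep_vars_def)
  define g where "g u = (if u \<in> S then a else b)" for u :: real
  have [measurable]: "g \<in> borel_measurable borel" unfolding g_def by measurable
  have int_g: "integrable M (\<lambda>\<omega>. g (X i \<omega>))" if "i < n" for i
    using that by (intro integrable_const_bound[where B = "\<bar>a\<bar> + \<bar>b\<bar>"]) (auto simp: g_def)
  have mean_g: "(\<integral>\<omega>. g (X i \<omega>) \<partial>M) = 1" if "i < n" for i
  proof -
    define E where "E = {\<omega> \<in> space M. X i \<omega> \<in> S}"
    have E [measurable]: "E \<in> sets M" unfolding E_def using that by measurable
    have "(\<integral>\<omega>. g (X i \<omega>) \<partial>M) = (\<integral>\<omega>. b + (a - b) * indicator E \<omega> \<partial>M)"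
      by (intro Bochner_Integration.integral_cong) (auto simp: g_def E_def indicator_def)
    also have "\<dots> = b + (a - b) * prob E"
      by (subst Bochner_Integration.integral_add)
        (auto simp: prob_space less_top[symmetric] intro!: integrable_real_indicator)
    finally show ?thesis
      using q[OF that] ab unfolding E_def by (simp add: algebra_simps)
  qed
  define G where "G \<omega> = (\<Prod>i<n. g (X i \<omega>))" for \<omega>
  have indep_g: "indep_vars (\<lambda>_. borel) (\<lambda>i \<omega>. g (X i \<omega>)) {..<n}"
    by (rule indep_vars_compose2[OF indep]) simp
  have int_G: "integrable M G"
    unfolding G_def by (rule indep_vars_integrable[OF _ indep_g]) (use int_g in auto)
  have mean_G: "(\<integral>\<omega>. G \<omega> \<partial>M) = 1"
    unfolding G_def by (subst indep_vars_lebesgue_integral[OF _ indep_g]) (use int_g mean_g in auto)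
  have G_nonneg: "0 \<le> G \<omega>" for \<omega>
    unfolding G_def g_def using ab by (auto intro!: prod_nonneg)
  define c where "c = a ^ m * b ^ (n - m)"
  show ?thesis
  proof (cases "c = 0")
    case False
    moreover have "0 \<le> c" unfolding c_def using ab by (intro mult_nonneg_nonneg zero_le_power) auto
    ultimately have "0 < c" by simp
    have "{\<omega> \<in> space M. m \<le> card {i. i < n \<and> X i \<omega> \<in> S}} \<subseteq> {\<omega> \<in> space M. c \<le> G \<omega>}"
    proof safe
      fix \<omega> assume "m \<le> card {i. i < n \<and> X i \<omega> \<in> S}"
      moreover have "card {i. i < n \<and> X i \<omega> \<in> S} \<le> n"
        using card_mono[of "{..<n}" "{i. i < n \<and> X i \<omega> \<in> S}"] by auto
      moreover have "G \<omega> = a ^ card {i. i < n \<and> X i \<omega> \<in> S} * b ^ (n - card {i. i < n \<and> X i \<omega> \<in> S})"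
        unfolding G_def g_def by (rule prod_if_eq_power_card)
      ultimately show "c \<le> G \<omega>"
        unfolding c_def using ab by (simp add: power_mult_power_diff_mono)
    qed
    then have "prob {\<omega> \<in> space M. m \<le> card {i. i < n \<and> X i \<omega> \<in> S}} \<le> prob {\<omega> \<in> space M. c \<le> G \<omega>}"
      using int_G by (intro finite_measure_mono) auto
    also have "\<dots> \<le> 1 / c"
      using integral_Markov_inequality_measure[OF int_G, of "space M" c] G_nonneg \<open>0 < c\<close> mean_G
      by auto
    finally show ?thesis
      using \<open>0 < c\<close> by (simp add: c_def field_simps)
  qed (simp flip: c_def)
qed

lemma (in prob_space) prob_count_ge_Chernoff:
  fixes X :: "nat \<Rightarrow> 'a \<Rightarrow> real"
  assumes indep: "indep_vars (\<lambda>_. borel) X {..<n}" and S: "S \<in> sets borel"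
    and q: "\<And>i. i < n \<Longrightarrow> prob {\<omega> \<in> space M. X i \<omega> \<in> S} = q"
    and "0 < q" "q < 1" "m \<le> n" "q \<le> real m / real n"
  shows "prob {\<omega> \<in> space M. m \<le> card {i. i < n \<and> X i \<omega> \<in> S}}
         \<le> exp (- (real n * KL (real m / real n) q))"
proof -
  define x where "x = real m / real n"
  have "0 < n" using assms by (cases n) auto
  then have x: "0 \<le> x" "x \<le> 1" "q \<le> x" using assms by (auto simp: x_def)
  have "(1 - x) / (1 - q) \<le> 1" "1 \<le> x / q" using x assms by auto
  then have weights: "(1 - x) / (1 - q) \<le> x / q" by linarith
  have "prob {\<omega> \<in> space M. m \<le> card {i. i < n \<and> X i \<omega> \<in> S}}
              * ((x / q) ^ m * ((1 - x) / (1 - q)) ^ (n - m)) \<le> 1"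
    using x weights assms by (intro prob_count_ge_tilted_le[OF indep S q]) auto
  then have "prob {\<omega> \<in> space M. m \<le> card {i. i < n \<and> X i \<omega> \<in> S}} * exp (real n * KL x q) \<le> 1"
    using exp_KL[of q m n] assms \<open>0 < n\<close> by (simp add: x_def)
  then show ?thesis
    by (simp add: exp_minus field_simps x_def)
qed

lemma (in prob_space) prob_count_ge_eq_0:
  fixes X :: "nat \<Rightarrow> 'a \<Rightarrow> real"
  assumes "\<And>i. i < n \<Longrightarrow> X i \<in> borel_measurable M" and [measurable]: "S \<in> sets borel"
    and null: "\<And>i. i < n \<Longrightarrow> prob {\<omega> \<in> space M. X i \<omega> \<in> S} = 0" and "0 < m"
  shows "prob {\<omega> \<in> space M. m \<le> card {i. i < n \<and> X i \<omega> \<in> S}} = 0"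
proof -
  have sets: "{\<omega> \<in> space M. X i \<omega> \<in> S} \<in> sets M" if "i < n" for i
  proof -
    have [measurable]: "X i \<in> borel_measurable M" using assms(1) that .
    show ?thesis by measurable
  qed
  have "{\<omega> \<in> space M. m \<le> card {i. i < n \<and> X i \<omega> \<in> S}} \<subseteq> (\<Union>i<n. {\<omega> \<in> space M. X i \<omega> \<in> S})"
    using \<open>0 < m\<close> by (force dest: card_gt_0_iff[THEN iffD1, OF less_le_trans])
  then have "prob {\<omega> \<in> space M. m \<le> card {i. i < n \<and> X i \<omega> \<in> S}}
             \<le> prob (\<Union>i<n. {\<omega> \<in> space M. X i \<omega> \<in> S})"
    using sets by (intro finite_measure_mono) auto
  also have "\<dots> \<le> (\<Sum>i<n. prob {\<omega> \<in> space M. X i \<omega> \<in> S})"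
    using sets by (intro measure_UNION_le) auto
  also have "\<dots> = 0" using null by simp
  finally show ?thesis by (simp add: measure_le_0_iff)
qed

lemma (in prob_space) prob_in_bdd_above_le:
  fixes p :: "'a \<Rightarrow> real"
  assumes [measurable]: "p \<in> borel_measurable M" and bdd: "bdd_above L" and "0 \<le> c"
    and le_c: "\<And>t. t \<in> L \<Longrightarrow> prob {\<omega> \<in> space M. p \<omega> \<le> t} \<le> c"
  shows "prob {\<omega> \<in> space M. p \<omega> \<in> L} \<le> c"
proof (cases "L = {}")
  case True
  then show ?thesis using \<open>0 \<le> c\<close> by simp
next
  case False
  define a where "a = Sup L"
  have upper: "t \<le> a" if "t \<in> L" for t
    unfolding a_def using that bdd by (rule cSup_upper)
  show ?thesis
  proof (cases "a \<in> L")
    case True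
    have "prob {\<omega> \<in> space M. p \<omega> \<in> L} \<le> prob {\<omega> \<in> space M. p \<omega> \<le> a}"
      using upper by (intro finite_measure_mono) auto
    then show ?thesis using le_c[OF True] by simp
  next
    case a_notin: False
    define A where "A k = {\<omega> \<in> space M. p \<omega> \<le> a - 1 / Suc k}" for k
    have A_sets: "range A \<subseteq> sets M" unfolding A_def by auto
    have "incseq A"
      unfolding A_def by (intro incseq_SucI) (auto simp: frac_le intro: order_trans)
    have A_le: "prob (A k) \<le> c" for k
    proof -
      have "a - 1 / Suc k < Sup L" by (simp add: a_def)
      then obtain t where "t \<in> L" "a - 1 / Suc k < t"
        using less_cSup_iff[OF False bdd] by auto
      then have "prob (A k) \<le> prob {\<omega> \<in> space M. p \<omega> \<le> t}"
        unfolding A_def by (intro finite_measure_mono) auto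
      then show ?thesis using le_c[OF \<open>t \<in> L\<close>] by simp
    qed
    have "{\<omega> \<in> space M. p \<omega> \<in> L} \<subseteq> (\<Union>k. A k)"
    proof safe
      fix \<omega> assume \<omega>: "\<omega> \<in> space M" "p \<omega> \<in> L"
      then have "p \<omega> < a" using upper[of "p \<omega>"] a_notin by (metis order_less_le)
      then obtain k where "1 / real (Suc k) < a - p \<omega>"
        using reals_Archimedean[of "a - p \<omega>"] by (auto simp: inverse_eq_divide)
      then have "\<omega> \<in> A k" using \<omega> by (simp add: A_def)
      then show "\<omega> \<in> (\<Union>k. A k)" by blast
    qed
    then have "prob {\<omega> \<in> space M. p \<omega> \<in> L} \<le> prob (\<Union>k. A k)"
      using A_sets by (intro finite_measure_mono) auto
    also have "\<dots> \<le> c"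
      using finite_Lim_measure_incseq[OF A_sets \<open>incseq A\<close>] A_le
      by (intro LIMSEQ_le_const2[where X = "\<lambda>k. prob (A k)"]) auto
    finally show ?thesis .
  qed
qed

lemma borel_measurable_KL [measurable]: "KL x \<in> borel_measurable borel"
  unfolding KL_def by measurable

locale iid_uniform = prob_space M for M :: "'a measure" +
  fixes n :: nat and U :: "nat \<Rightarrow> 'a \<Rightarrow> real"
  assumes indep_U: "indep_vars (\<lambda>_. borel) U {..<n}"
    and distr_U: "\<And>i. i < n \<Longrightarrow> distr M borel (U i) = uniform_measure lborel {0..1}"
begin

lemma measurable_U: "i < n \<Longrightarrow> U i \<in> borel_measurable M"
  using indep_U by (auto simp: indep_vars_def)

lemma prob_U_in:
  assumes "i < n" "A \<in> sets borel"
  shows "prob {\<omega> \<in> space M. U i \<omega> \<in> A} = measure lborel ({0..1} \<inter> A)"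
proof -
  have "prob {\<omega> \<in> space M. U i \<omega> \<in> A} = measure (distr M borel (U i)) A"
    using assms measurable_U by (subst measure_distr) (auto simp: vimage_def Int_def conj_commute)
  then show ?thesis
    using assms by (simp add: distr_U)
qed

lemma prob_U_atMost:
  assumes "i < n" "t \<le> 1"
  shows "prob {\<omega> \<in> space M. U i \<omega> \<le> t} = max 0 t"
proof -
  have "prob {\<omega> \<in> space M. U i \<omega> \<le> t} = measure lborel ({0..1} \<inter> {..t})"
    using prob_U_in[of i "{..t}"] assms by simp
  also have "{0..1} \<inter> {..t} = {0..t}" using assms by auto
  finally show ?thesis by simp
qed

lemma prob_U_atLeast:
  assumes "i < n" "0 \<le> t"
  shows "prob {\<omega> \<in> space M. t \<le> U i \<omega>} = max 0 (1 - t)"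
proof -
  have "prob {\<omega> \<in> space M. t \<le> U i \<omega>} = measure lborel ({0..1} \<inter> {t..})"
    using prob_U_in[of i "{t..}"] assms by simp
  also have "{0..1} \<inter> {t..} = {t..1}" using assms by auto
  finally show ?thesis by simp
qed

lemma sets_order_stat_le:
  assumes "1 \<le> j" "j \<le> n"
  shows "{\<omega> \<in> space M. order_stat n (\<lambda>i. U i \<omega>) j \<le> t} \<in> sets M"
proof -
  have "{\<omega> \<in> space M. order_stat n (\<lambda>i. U i \<omega>) j \<le> t}
        = {\<omega> \<in> space M. j \<le> card {i. i < n \<and> U i \<omega> \<in> {..t}}}"
    using order_stat_le_iff[OF assms] by simp
  also have "\<dots> \<in> sets M"
    by (rule sets_count_ge[OF measurable_U]) auto
  finally show ?thesis .
qed

lemma measurable_order_stat [measurable]: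
  assumes "1 \<le> j" "j \<le> n"
  shows "(\<lambda>\<omega>. order_stat n (\<lambda>i. U i \<omega>) j) \<in> borel_measurable M"
  unfolding borel_measurable_iff_le using sets_order_stat_le[OF assms] by blast

lemma prob_order_stat_le:
  assumes j: "1 \<le> j" "j \<le> n" and t: "t \<le> real j / real n"
  shows "prob {\<omega> \<in> space M. order_stat n (\<lambda>i. U i \<omega>) j \<le> t}
         \<le> exp (- (real n * KL (real j / real n) t))"
proof -
  have "real j / real n \<le> 1" using j by simp
  then have t1: "t \<le> 1" using t by linarith
  have event: "{\<omega> \<in> space M. order_stat n (\<lambda>i. U i \<omega>) j \<le> t}
             = {\<omega> \<in> space M. j \<le> card {i. i < n \<and> U i \<omega> \<in> {..t}}}"
    using order_stat_le_iff[OF j] by simp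
  consider "t \<le> 0" | "0 < t" "t < 1" | "t = 1" using t1 by linarith
  then show ?thesis
  proof cases
    case 1
    then have "prob {\<omega> \<in> space M. j \<le> card {i. i < n \<and> U i \<omega> \<in> {..t}}} = 0"
      using j t1 by (intro prob_count_ge_eq_0 measurable_U) (auto simp: prob_U_atMost)
    then show ?thesis by (simp add: event)
  next
    case 2
    then show ?thesis
      unfolding event using j t
      by (intro prob_count_ge_Chernoff[OF indep_U]) (auto simp: prob_U_atMost)
  next
    case 3
    then have "real j / real n = 1" using t j by simp
    then show ?thesis using 3 by (simp add: KL_def)
  qed
qed

lemma prob_order_stat_ge:
  assumes j: "1 \<le> j" "j \<le> n" and t: "real j / real n \<le> t"
  shows "prob {\<omega> \<in> space M. t \<le> order_stat n (\<lambda>i. U i \<omega>) j}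
         \<le> exp (- (real n * KL (real j / real n) t))"
proof -
  have "0 < real j / real n" using j by simp
  then have t0: "0 < t" using t by linarith
  have nj: "real (n - j) / real n = 1 - real j / real n"
    using j by (simp add: of_nat_diff field_simps)
  define count where "count \<omega> = card {i. i < n \<and> U i \<omega> \<in> {t..}}" for \<omega>
  have sets: "{\<omega> \<in> space M. m \<le> count \<omega>} \<in> sets M" for m
    unfolding count_def by (rule sets_count_ge[OF measurable_U]) auto
  have "{\<omega> \<in> space M. t \<le> order_stat n (\<lambda>i. U i \<omega>) j} \<subseteq> {\<omega> \<in> space M. n - j + 1 \<le> count \<omega>}"
    using order_stat_ge_imp_card[OF j] by (auto simp: count_def)
  then have event: "prob {\<omega> \<in> space M. t \<le> order_stat n (\<lambda>i. U i \<omega>) j}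
                    \<le> prob {\<omega> \<in> space M. n - j + 1 \<le> count \<omega>}"
    using sets by (rule finite_measure_mono)
  show ?thesis
  proof (cases "t < 1")
    case True
    note event
    \<comment> \<open>weakened to \<open>n - j\<close>, whose Chernoff exponent is \<open>n K(1 - j/n, 1 - t) = n K(j/n, t)\<close>\<close>
    also have "prob {\<omega> \<in> space M. n - j + 1 \<le> count \<omega>} \<le> prob {\<omega> \<in> space M. n - j \<le> count \<omega>}"
      using sets by (intro finite_measure_mono) auto
    also have "\<dots> \<le> exp (- (real n * KL (real (n - j) / real n) (1 - t)))"
      unfolding count_def using t t0 True
      by (intro prob_count_ge_Chernoff[OF indep_U]) (auto simp: prob_U_atLeast nj)
    finally show ?thesis by (simp add: nj KL_swap)
  next
    case False
    then have "prob {\<omega> \<in> space M. n - j + 1 \<le> count \<omega>} = 0"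
      unfolding count_def using t0 by (intro prob_count_ge_eq_0 measurable_U) (auto simp: prob_U_atLeast)
    then show ?thesis using event exp_ge_zero[of "- (real n * KL (real j / real n) t)"] by linarith
  qed
qed

lemma prob_KL_order_stat_gt:
  assumes j: "1 \<le> j" "j \<le> n"
  shows "prob {\<omega> \<in> space M. real n * KL (real j / real n) (order_stat n (\<lambda>i. U i \<omega>) j) > s}
         \<le> 2 * exp (- s)"
proof -
  define x where "x = real j / real n"
  define p where "p \<omega> = order_stat n (\<lambda>i. U i \<omega>) j" for \<omega>
  define L where "L = {t. s < real n * KL x t}"
  have [measurable]: "p \<in> borel_measurable M"
    unfolding p_def using j by (rule measurable_order_stat)
  have [measurable]: "L \<in> sets borel"
    unfolding L_def by measurable
  have "{\<omega> \<in> space M. s < real n * KL x (p \<omega>)}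
        = {\<omega> \<in> space M. p \<omega> \<in> L \<inter> {..x}} \<union> {\<omega> \<in> space M. p \<omega> \<in> L \<inter> {x..}}"
    by (auto simp: L_def)
  then have "prob {\<omega> \<in> space M. s < real n * KL x (p \<omega>)}
             \<le> prob {\<omega> \<in> space M. p \<omega> \<in> L \<inter> {..x}} + prob {\<omega> \<in> space M. p \<omega> \<in> L \<inter> {x..}}"
    by (simp only:) (intro measure_Un_le; measurable)
  also have "prob {\<omega> \<in> space M. p \<omega> \<in> L \<inter> {..x}} \<le> exp (- s)"
  proof (rule prob_in_bdd_above_le)
    fix t assume "t \<in> L \<inter> {..x}"
    then have "prob {\<omega> \<in> space M. p \<omega> \<le> t} \<le> exp (- (real n * KL x t))"
      using prob_order_stat_le[OF j, of t] by (simp add: x_def p_def)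
    also have "\<dots> \<le> exp (- s)" using \<open>t \<in> L \<inter> {..x}\<close> by (simp add: L_def)
    finally show "prob {\<omega> \<in> space M. p \<omega> \<le> t} \<le> exp (- s)" .
  qed (auto simp: bdd_above_def)
  also have "prob {\<omega> \<in> space M. p \<omega> \<in> L \<inter> {x..}} \<le> exp (- s)"
  proof -
    have "{\<omega> \<in> space M. p \<omega> \<in> L \<inter> {x..}} = {\<omega> \<in> space M. - p \<omega> \<in> uminus ` (L \<inter> {x..})}"
      by force
    moreover have "prob {\<omega> \<in> space M. - p \<omega> \<in> uminus ` (L \<inter> {x..})} \<le> exp (- s)"
    proof (rule prob_in_bdd_above_le)
      fix t assume "t \<in> uminus ` (L \<inter> {x..})"
      then have "- t \<in> L" "x \<le> - t" by auto
      have "prob {\<omega> \<in> space M. - p \<omega> \<le> t} = prob {\<omega> \<in> space M. - t \<le> p \<omega>}"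
        by (simp add: minus_le_iff)
      also have "\<dots> \<le> exp (- (real n * KL x (- t)))"
        using prob_order_stat_ge[OF j, of "- t"] \<open>x \<le> - t\<close> by (simp add: x_def p_def)
      also have "\<dots> \<le> exp (- s)" using \<open>- t \<in> L\<close> by (simp add: L_def)
      finally show "prob {\<omega> \<in> space M. - p \<omega> \<le> t} \<le> exp (- s)" .
    qed (auto simp: bdd_above_def intro!: exI[of _ "- x"])
    ultimately show ?thesis by simp
  qed
  finally show ?thesis by (simp add: x_def p_def)
qed

end

theorem lemma5:
  fixes M :: "'a measure" and U :: "nat \<Rightarrow> 'a \<Rightarrow> real" and n :: nat and s :: real
  assumes "prob_space M"
    and "prob_space.indep_vars M (\<lambda>_. borel) U {..<n}"
    and "\<And>i. i < n \<Longrightarrow> distr M borel (U i) = uniform_measure lborel {0..1::real}"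
    and "n > 2"
    and "s > 0"
  shows "(\<forall>j\<in>{2..n}.
           measure M {\<omega> \<in> space M. real n * KL (real j / real n) (order_stat n (\<lambda>i. U i \<omega>) j) > s}
             \<le> exp 1 * sqrt 2 * real j * exp (- (1 - 1 / real j) * s))
       \<and> measure M {\<omega> \<in> space M. real n * KL (1 / real n) (order_stat n (\<lambda>i. U i \<omega>) 1) > s}
             \<le> (1 + 9 / exp 1) * exp (- s)"
proof
  interpret iid_uniform M n U
    using assms(1-3) by (simp add: iid_uniform_def iid_uniform_axioms_def)
  have e: "2 \<le> exp (1::real)" "exp (1::real) \<le> 9"
    using exp_ge_add_one_self[of 1] exp_le by auto
  show "\<forall>j\<in>{2..n}. prob {\<omega> \<in> space M. real n * KL (real j / real n) (order_stat n (\<lambda>i. U i \<omega>) j) > s}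
          \<le> exp 1 * sqrt 2 * real j * exp (- (1 - 1 / real j) * s)"
  proof
    fix j assume j: "j \<in> {2..n}"
    have "2 * 1 * 1 \<le> exp 1 * sqrt 2 * real j"
      using e j by (intro mult_mono) auto
    moreover have "exp (- s) \<le> exp (- (1 - 1 / real j) * s)"
      using j \<open>s > 0\<close> by (simp add: algebra_simps)
    ultimately have "2 * exp (- s) \<le> exp 1 * sqrt 2 * real j * exp (- (1 - 1 / real j) * s)"
      by (intro mult_mono) auto
    then show "prob {\<omega> \<in> space M. real n * KL (real j / real n) (order_stat n (\<lambda>i. U i \<omega>) j) > s}
          \<le> exp 1 * sqrt 2 * real j * exp (- (1 - 1 / real j) * s)"
      using prob_KL_order_stat_gt[of j s] j by simp
  qed
  have "prob {\<omega> \<in> space M. real n * KL (1 / real n) (order_stat n (\<lambda>i. U i \<omega>) 1) > s}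
        \<le> 2 * exp (- s)"
    using prob_KL_order_stat_gt[of 1 s] assms(4) by simp
  also have "\<dots> \<le> (1 + 9 / exp 1) * exp (- s)"
    using e by (intro mult_right_mono) auto
  finally show "prob {\<omega> \<in> space M. real n * KL (1 / real n) (order_stat n (\<lambda>i. U i \<omega>) 1) > s}
          \<le> (1 + 9 / exp 1) * exp (- s)" .
qed

end
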